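(* Let $(M,\Gamma,\le)$ be a $po$-$\Gamma$-groupoid and let $f$ be a fuzzy subset of $M$. Then $f$ is a fuzzy right ideal of $M$ if and only if (1) $f\circ 1\preceq f$ and (2) for all $x,y\in M$, if $x\le y$ then $f(x)\ge f(y)$.
   Context: Let $M$ and $\Gamma$ be nonempty sets with a map $M\times\Gamma\times M\to M$, $(a,\gamma,b)\mapsto a\gamma b$. A $po$-$\Gamma$-groupoid is such an $M$ with a partial order $\le$ on $M$ such that $a\le b$ implies $a\gamma c\le b\gamma c$ and $c\gamma a\le c\gamma b$ for all $c\in M$, $\gamma\in\Gamma$. A fuzzy subset of $M$ is a map $M\to[0,1]$. For $a\in M$ let $A_a=\{(y,z)\in M\times M : a\le y\gamma z \text{ for some } \gamma\in\Gamma\}$. For fuzzy subsets $f,g$, define $(f\circ g)(a)=\bigvee_{(y,z)\in A_a}\min\{f(y),g(z)\}$ if $A_a\neq\emptyset$ and $(f\circ g)(a)=0$ if $A_a=\emptyset$. $f\preceq g$ means $f(a)\le g(a)$ for all $a\in M$. $1$ denotes the fuzzy subset with $1(x)=1$ for all $x\in M$. A fuzzy right ideal of $M$ is a fuzzy subset $f$ with $f(x\gamma y)\ge f(x)$ for all $x,y\in M$, $\gamma\in\Gamma$, and such that $x\le y$ implies $f(x)\ge f(y)$. *)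

theory Defs
  imports Main "HOL.Real"
begin

(* M is modelled by the type 'm, Gamma by the type 'g (both nonempty automatically).
   The ternary operation is mult a \<gamma> b, the partial order is le. *)

definition po_gamma_groupoid :: "('m \<Rightarrow> 'g \<Rightarrow> 'm \<Rightarrow> 'm) \<Rightarrow> ('m \<Rightarrow> 'm \<Rightarrow> bool) \<Rightarrow> bool" where
  "po_gamma_groupoid mult le \<longleftrightarrow>
     (\<forall>a. le a a) \<and> (\<forall>a b. le a b \<and> le b a \<longrightarrow> a = b) \<and>
     (\<forall>a b c. le a b \<and> le b c \<longrightarrow> le a c) \<and>
     (\<forall>a b c \<gamma>. le a b \<longrightarrow> le (mult a \<gamma> c) (mult b \<gamma> c) \<and> le (mult c \<gamma> a) (mult c \<gamma> b))"

definition fuzzy_subset :: "('m \<Rightarrow> real) \<Rightarrow> bool" where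
  "fuzzy_subset f \<longleftrightarrow> (\<forall>x. 0 \<le> f x \<and> f x \<le> 1)"

definition A_set :: "('m \<Rightarrow> 'g \<Rightarrow> 'm \<Rightarrow> 'm) \<Rightarrow> ('m \<Rightarrow> 'm \<Rightarrow> bool) \<Rightarrow> 'm \<Rightarrow> ('m \<times> 'm) set" where
  "A_set mult le a = {(y, z). \<exists>\<gamma>. le a (mult y \<gamma> z)}"

definition fuzzy_comp :: "('m \<Rightarrow> 'g \<Rightarrow> 'm \<Rightarrow> 'm) \<Rightarrow> ('m \<Rightarrow> 'm \<Rightarrow> bool) \<Rightarrow>
    ('m \<Rightarrow> real) \<Rightarrow> ('m \<Rightarrow> real) \<Rightarrow> 'm \<Rightarrow> real" where
  "fuzzy_comp mult le f g a =
     (if A_set mult le a = {} then 0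
      else Sup ((\<lambda>(y, z). min (f y) (g z)) ` A_set mult le a))"

definition fuzzy_le :: "('m \<Rightarrow> real) \<Rightarrow> ('m \<Rightarrow> real) \<Rightarrow> bool" where
  "fuzzy_le f g \<longleftrightarrow> (\<forall>a. f a \<le> g a)"

definition fuzzy_one :: "'m \<Rightarrow> real" where
  "fuzzy_one = (\<lambda>_. 1)"

definition fuzzy_right_ideal :: "('m \<Rightarrow> 'g \<Rightarrow> 'm \<Rightarrow> 'm) \<Rightarrow> ('m \<Rightarrow> 'm \<Rightarrow> bool) \<Rightarrow> ('m \<Rightarrow> real) \<Rightarrow> bool" where
  "fuzzy_right_ideal mult le f \<longleftrightarrow>
     fuzzy_subset f \<and>
     (\<forall>x y \<gamma>. f (mult x \<gamma> y) \<ge> f x) \<and>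
     (\<forall>x y. le x y \<longrightarrow> f x \<ge> f y)"

end

theory Submission
  imports Defs
begin

text \<open>Since \<open>1\<close> is the top fuzzy subset, \<open>(f \<circ> 1)(a)\<close> is the supremum of \<open>f(y)\<close> over all
  \<open>y\<close> with \<open>a \<le> y\<gamma>z\<close>. For antitone \<open>f\<close>, \<open>f(y) \<le> f(y\<gamma>z) \<le> f(a)\<close> bounds it by \<open>f(a)\<close>;
  conversely, reflexivity puts \<open>(x, y)\<close> into \<open>A\<^sub>x\<^sub>\<gamma>\<^sub>y\<close>, so \<open>f(x) \<le> (f \<circ> 1)(x\<gamma>y) \<le> f(x\<gamma>y)\<close>.\<close>

lemma fuzzy_comp_le:
  assumes "0 \<le> c"
    and "\<And>y \<gamma> z. le a (mult y \<gamma> z) \<Longrightarrow> min (f y) (g z) \<le> c"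
  shows "fuzzy_comp mult le f g a \<le> c"
proof (cases "A_set mult le a = {}")
  case True
  then show ?thesis using assms(1) by (simp add: fuzzy_comp_def)
next
  case False
  then have "Sup ((\<lambda>(y, z). min (f y) (g z)) ` A_set mult le a) \<le> c"
    by (intro cSup_least) (auto simp: A_set_def intro: assms(2))
  then show ?thesis using False by (simp add: fuzzy_comp_def)
qed

lemma min_le_fuzzy_comp:
  assumes "fuzzy_subset g" and "le a (mult y \<gamma> z)"
  shows "min (f y) (g z) \<le> fuzzy_comp mult le f g a"
proof -
  have mem: "(y, z) \<in> A_set mult le a" using assms(2) by (auto simp: A_set_def)
  have "bdd_above ((\<lambda>(y, z). min (f y) (g z)) ` A_set mult le a)"
    using assms(1) by (intro bdd_aboveI[where M = 1]) (auto simp: fuzzy_subset_def min_le_iff_disj)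
  then have "min (f y) (g z) \<le> Sup ((\<lambda>(y, z). min (f y) (g z)) ` A_set mult le a)"
    by (rule cSup_upper[rotated]) (use mem in force)
  then show ?thesis using mem by (auto simp: fuzzy_comp_def)
qed

lemma fuzzy_comp_one_le_iff:
  fixes mult :: "'m \<Rightarrow> 'g \<Rightarrow> 'm \<Rightarrow> 'm" and f :: "'m \<Rightarrow> real"
  assumes refl: "\<And>a. le a a"
    and "fuzzy_subset f"
    and antitone: "\<And>x y. le x y \<Longrightarrow> f y \<le> f x"
  shows "fuzzy_le (fuzzy_comp mult le f fuzzy_one) f \<longleftrightarrow> (\<forall>x y \<gamma>. f x \<le> f (mult x \<gamma> y))"
proof
  assume comp_le: "fuzzy_le (fuzzy_comp mult le f fuzzy_one) f"
  show "\<forall>x y \<gamma>. f x \<le> f (mult x \<gamma> y)"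
  proof (intro allI)
    fix x y :: 'm and \<gamma>
    have "f x = min (f x) (fuzzy_one y)"
      using assms(2) by (simp add: fuzzy_one_def fuzzy_subset_def)
    also have "\<dots> \<le> fuzzy_comp mult le f fuzzy_one (mult x \<gamma> y)"
      by (rule min_le_fuzzy_comp[where \<gamma> = \<gamma>]) (auto simp: fuzzy_subset_def fuzzy_one_def refl)
    also have "\<dots> \<le> f (mult x \<gamma> y)"
      using comp_le by (simp add: fuzzy_le_def)
    finally show "f x \<le> f (mult x \<gamma> y)" .
  qed
next
  assume right: "\<forall>x y \<gamma>. f x \<le> f (mult x \<gamma> y)"
  show "fuzzy_le (fuzzy_comp mult le f fuzzy_one) f"
    unfolding fuzzy_le_def
  proof
    fix a
    show "fuzzy_comp mult le f fuzzy_one a \<le> f a"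
    proof (rule fuzzy_comp_le)
      show "0 \<le> f a" using assms(2) by (simp add: fuzzy_subset_def)
    next
      fix y \<gamma> z
      assume "le a (mult y \<gamma> z)"
      then have "f (mult y \<gamma> z) \<le> f a" by (rule antitone)
      moreover have "f y \<le> f (mult y \<gamma> z)" using right by blast
      ultimately show "min (f y) (fuzzy_one z) \<le> f a" by linarith
    qed
  qed
qed

theorem proposition4:
  fixes mult :: "'m \<Rightarrow> 'g \<Rightarrow> 'm \<Rightarrow> 'm" and le :: "'m \<Rightarrow> 'm \<Rightarrow> bool" and f :: "'m \<Rightarrow> real"
  assumes "po_gamma_groupoid mult le"
    and "fuzzy_subset f"
  shows "fuzzy_right_ideal mult le f \<longleftrightarrow>
           (fuzzy_le (fuzzy_comp mult le f fuzzy_one) f \<and>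
            (\<forall>x y. le x y \<longrightarrow> f x \<ge> f y))"
proof -
  have refl: "\<And>a. le a a" using assms(1) by (simp add: po_gamma_groupoid_def)
  have "fuzzy_le (fuzzy_comp mult le f fuzzy_one) f \<longleftrightarrow> (\<forall>x y \<gamma>. f x \<le> f (mult x \<gamma> y))"
    if "\<forall>x y. le x y \<longrightarrow> f x \<ge> f y"
    using that by (intro fuzzy_comp_one_le_iff[OF refl assms(2)]) blast
  then show ?thesis
    using assms(2) unfolding fuzzy_right_ideal_def by blast
qed

end
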